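(* Let $H=[H_1,\dots,H_N]'$ be a function $\mathbb{R}^m\to\mathbb{R}^N$ each of whose components is convex, and let $\mathcal{A}=\{1,\dots,N\}$. Assume there exist $u^*\in\mathbb{R}^m$ and a set $\mathcal{G}\subset\mathcal{A}$ with $|\mathcal{G}|\ge2$ such that (a) $H_i(u^* )=\max_{1\le j\le N}H_j(u^* )$ for all $i\in\mathcal{G}$; (b) for all $u\ne u^*$ there exists $i\in\mathcal{G}$ such that $H_i(u)>H_i(u^* )$; (c) $u^*$ is not a minimum of any $H_i$, $i\in\mathcal{G}$. Then there exists a non-pure vector $p^*\in\mathcal{S}_{N-1}$ with support $I(p^* )\subseteq\mathcal{G}$ such that \[ \inf_{u\in\mathbb{R}^m}\sup_{p\in\mathcal{S}_{N-1}}p'H(u)=(p^* )'H(u^* )=\sup_{p\in\mathcal{S}_{N-1}}\inf_{u\in\mathbb{R}^m}p'H(u). \]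
   Context: $\mathcal{S}_{N-1}=\{p\in\mathbb{R}^N:0\le p_j\le1,\sum_{j=1}^Np_j=1\}$ is the unit simplex. The support of $p$ is $I(p)=\{i:p_i>0\}$. A vector $p\in\mathcal{S}_{N-1}$ is non-pure if it is not a vertex of $\mathcal{S}_{N-1}$, i.e., it has at least two positive components. *)

theory Defs
  imports "HOL-Analysis.Analysis"
begin

definition unit_simplex :: "nat \<Rightarrow> (nat \<Rightarrow> real) set" where
  "unit_simplex N = {p. (\<forall>j\<in>{1..N}. 0 \<le> p j \<and> p j \<le> 1) \<and> (\<Sum>j\<in>{1..N}. p j) = 1
                   \<and> (\<forall>j. j \<notin> {1..N} \<longrightarrow> p j = 0)}"

definition supp_vec :: "nat \<Rightarrow> (nat \<Rightarrow> real) \<Rightarrow> nat set" where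
  "supp_vec N p = {i\<in>{1..N}. p i > 0}"

definition non_pure :: "nat \<Rightarrow> (nat \<Rightarrow> real) \<Rightarrow> bool" where
  "non_pure N p \<longleftrightarrow> card (supp_vec N p) \<ge> 2"

definition pH :: "nat \<Rightarrow> (nat \<Rightarrow> real) \<Rightarrow> (nat \<Rightarrow> 'a \<Rightarrow> real) \<Rightarrow> 'a \<Rightarrow> real" where
  "pH N p H u = (\<Sum>j\<in>{1..N}. p j * H j u)"

end

theory Submission
  imports Defs
begin

text \<open>Shifting by \<open>M = max\<^sub>j H\<^sub>j(u\<^sup>*)\<close>, hypotheses (a) and (b) say that the convex functions
  \<open>H\<^sub>i - M\<close>, \<open>i \<in> G\<close>, are never all negative at the same point. By the theorem of the alternative
  for finitely many convex functions, some convex combination \<open>p\<^sup>*\<close> of them is nonnegative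
  everywhere, i.e. \<open>p\<^sup>*'H(u) \<ge> M\<close> for all \<open>u\<close>, while \<open>p'H(u\<^sup>*) \<le> M\<close> for every \<open>p\<close> in the simplex.
  So \<open>(p\<^sup>*, u\<^sup>*)\<close> is a saddle point with value \<open>M\<close>. If \<open>p\<^sup>*\<close> were a vertex \<open>e\<^sub>i\<close>, then \<open>H\<^sub>i \<ge> M = H\<^sub>i(u\<^sup>*)\<close>
  would contradict (c).\<close>

lemma convex_on_sum_cmul:
  fixes f :: "'i \<Rightarrow> 'a::real_vector \<Rightarrow> real"
  assumes "finite J" "convex X"
    and "\<And>j. j \<in> J \<Longrightarrow> convex_on X (f j)" "\<And>j. j \<in> J \<Longrightarrow> q j \<ge> 0"
  shows "convex_on X (\<lambda>u. \<Sum>j\<in>J. q j * f j u)"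
  using assms
  by (induction J rule: finite_induct) (auto simp: convex_on_const intro!: convex_on_add convex_on_cmul)

lemma convex_strict_sublevel:
  fixes f :: "'a::real_vector \<Rightarrow> real"
  assumes "convex_on X f"
  shows "convex {u\<in>X. f u < c}"
  unfolding convex_alt
proof (intro ballI allI impI)
  fix x y and t :: real
  assume x: "x \<in> {u\<in>X. f u < c}" and y: "y \<in> {u\<in>X. f u < c}" and "0 \<le> t \<and> t \<le> 1"
  then have t: "0 \<le> t" "t \<le> 1" by auto
  have X: "convex X" using assms convex_on_imp_convex by blast
  have "f ((1 - t) *\<^sub>R x + t *\<^sub>R y) \<le> (1 - t) * f x + t * f y"
    using convex_onD[OF assms t] x y by auto
  also have "\<dots> < (1 - t) * c + t * c"
  proof (cases "t = 0")
    case False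
    then show ?thesis using x y t
      by (intro add_le_less_mono mult_left_mono mult_strict_left_mono) auto
  qed (use x in auto)
  finally show "(1 - t) *\<^sub>R x + t *\<^sub>R y \<in> {u\<in>X. f u < c}"
    using X x y t by (auto simp: convex_alt algebra_simps)
qed

lemma affine_pair_simultaneously_negative:
  fixes a b c d :: real
  assumes "a > 0" "b \<ge> 0" "c \<ge> 0" "d > 0" "b * c < a * d"
  obtains t where "0 \<le> t" "t \<le> 1" "(1 - t) * c - t * a < 0" "t * b - (1 - t) * d < 0"
proof -
  \<comment> \<open>The two forms vanish at \<open>t1\<close> and \<open>t2\<close>, and \<open>b * c < a * d\<close> says \<open>t1 < t2\<close>.\<close>
  define t1 t2 where "t1 = c / (a + c)" and "t2 = d / (b + d)"
  have "t1 < t2" "0 \<le> t1" "t2 \<le> 1"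
    using assms by (auto simp: t1_def t2_def divide_simps algebra_simps)
  define t where "t = (t1 + t2) / 2"
  have "0 \<le> t" "t \<le> 1"
    using \<open>t1 < t2\<close> \<open>0 \<le> t1\<close> \<open>t2 \<le> 1\<close> by (auto simp: t_def)
  moreover have "c = t1 * (a + c)" "d = t2 * (b + d)"
    using assms by (simp_all add: t1_def t2_def)
  moreover have "t1 * (a + c) < t * (a + c)" "t * (b + d) < t2 * (b + d)"
    using \<open>t1 < t2\<close> assms by (auto simp: t_def intro!: mult_strict_right_mono)
  ultimately show ?thesis
    by (intro that[of t]) (auto simp: algebra_simps)
qed

text \<open>The two sides are the weights \<open>\<lambda>\<close> at which \<open>\<lambda> f + (1 - \<lambda>) g\<close> vanishes at \<open>v\<close> and at \<open>u\<close>.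
  In the wrong order, some point of the segment from \<open>v\<close> to \<open>u\<close> would make \<open>f\<close> and \<open>g\<close> both negative.\<close>

lemma convex_alternative_ratio_le:
  fixes f g :: "'a::real_vector \<Rightarrow> real"
  assumes cf: "convex_on X f" and cg: "convex_on X g"
    and alt: "\<And>w. w \<in> X \<Longrightarrow> f w \<ge> 0 \<or> g w \<ge> 0"
    and u: "u \<in> X" "f u < 0" and v: "v \<in> X" "g v < 0"
  shows "- g v / (f v - g v) \<le> g u / (g u - f u)"
proof (rule ccontr)
  assume "\<not> ?thesis"
  moreover have "g u \<ge> 0" "f v \<ge> 0"
    using alt u v by force+
  ultimately have "g u * f v < (- f u) * (- g v)"
    using u v by (simp add: divide_simps algebra_simps split: if_splits)
  then obtain t where t: "0 \<le> t" "t \<le> 1" "(1 - t) * f v + t * f u < 0" "(1 - t) * g v + t * g u < 0"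
    using affine_pair_simultaneously_negative[of "- f u" "g u" "f v" "- g v"] \<open>g u \<ge> 0\<close> \<open>f v \<ge> 0\<close> u v
    by (auto simp: algebra_simps)
  define w where "w = (1 - t) *\<^sub>R v + t *\<^sub>R u"
  have "w \<in> X"
    using convex_on_imp_convex[OF cf] u v t by (simp add: w_def convex_alt)
  moreover have "f w < 0" "g w < 0"
    using convex_onD[OF cf t(1,2) v(1) u(1)] convex_onD[OF cg t(1,2) v(1) u(1)] t
    by (simp_all add: w_def)
  ultimately show False
    using alt by fastforce
qed

lemma convex_alternative_pair:
  fixes f g :: "'a::real_vector \<Rightarrow> real"
  assumes cf: "convex_on X f" and cg: "convex_on X g"
    and alt: "\<And>u. u \<in> X \<Longrightarrow> f u \<ge> 0 \<or> g u \<ge> 0"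
  obtains l where "0 \<le> l" "l \<le> 1" "\<And>u. u \<in> X \<Longrightarrow> l * f u + (1 - l) * g u \<ge> 0"
proof -
  define L where "L = insert 0 ((\<lambda>v. - g v / (f v - g v)) ` {v\<in>X. g v < 0})"
  have L_le_1: "x \<le> 1" if "x \<in> L" for x
    using that alt by (force simp: L_def divide_simps)
  then have "bdd_above L"
    by (auto simp: bdd_above_def)
  define l where "l = Sup L"
  have "0 \<le> l"
    using \<open>bdd_above L\<close> by (auto simp: l_def L_def intro: cSup_upper)
  moreover have "l \<le> 1"
    using L_le_1 by (auto simp: l_def L_def intro!: cSup_least)
  have l_lower: "- g v / (f v - g v) \<le> l" if "v \<in> X" "g v < 0" for v
    using \<open>bdd_above L\<close> that by (auto simp: l_def L_def intro!: cSup_upper)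
  have l_upper: "l \<le> g u / (g u - f u)" if "u \<in> X" "f u < 0" for u
    using that alt[of u] convex_alternative_ratio_le[OF cf cg alt that]
    by (auto simp: l_def L_def intro!: cSup_least)
  have "l * f u + (1 - l) * g u \<ge> 0" if u: "u \<in> X" for u
  proof -
    consider "f u < 0" "g u \<ge> 0" | "g u < 0" "f u \<ge> 0" | "f u \<ge> 0" "g u \<ge> 0"
      using alt[OF u] by linarith
    then show ?thesis
    proof cases
      case 1
      then show ?thesis using l_upper[OF u 1(1)] by (simp add: divide_simps algebra_simps)
    next
      case 2
      then show ?thesis using l_lower[OF u 2(1)] by (simp add: divide_simps algebra_simps)
    next
      case 3
      then show ?thesis using \<open>0 \<le> l\<close> \<open>l \<le> 1\<close> by simp
    qed
  qed
  then show ?thesis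
    using \<open>0 \<le> l\<close> \<open>l \<le> 1\<close> that by blast
qed

lemma convex_alternative:
  fixes f :: "'i \<Rightarrow> 'a::real_vector \<Rightarrow> real"
  assumes "finite I" "I \<noteq> {}" "convex X" "\<And>i. i \<in> I \<Longrightarrow> convex_on X (f i)"
    and "\<And>u. u \<in> X \<Longrightarrow> \<exists>i\<in>I. f i u \<ge> 0"
  shows "\<exists>p. (\<forall>i\<in>I. p i \<ge> 0) \<and> sum p I = 1 \<and> (\<forall>u\<in>X. (\<Sum>i\<in>I. p i * f i u) \<ge> 0)"
  using assms
proof (induction I arbitrary: X rule: finite_ne_induct)
  case (singleton i)
  then show ?case
    by (intro exI[of _ "\<lambda>_. 1"]) auto
next
  case (insert k J)
  \<comment> \<open>Where \<open>f k\<close> is negative the other functions satisfy the alternative; the combination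
    they yield there is then paired with \<open>f k\<close> on all of \<open>X\<close>.\<close>
  define X' where "X' = {u\<in>X. f k u < 0}"
  have "convex X'"
    unfolding X'_def using insert.prems by (intro convex_strict_sublevel) auto
  moreover have "convex_on X' (f i)" if "i \<in> J" for i
    using insert.prems that \<open>convex X'\<close> by (auto simp: X'_def intro: convex_on_subset)
  moreover have "\<exists>i\<in>J. f i u \<ge> 0" if "u \<in> X'" for u
    using insert.prems(3)[of u] that by (force simp: X'_def)
  ultimately obtain q where q: "\<forall>i\<in>J. q i \<ge> 0" "sum q J = 1" "\<forall>u\<in>X'. (\<Sum>i\<in>J. q i * f i u) \<ge> 0"
    using insert.IH by blast
  define g where "g u = (\<Sum>i\<in>J. q i * f i u)" for u
  have "convex_on X g"
    unfolding g_def using insert q by (intro convex_on_sum_cmul) auto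
  moreover have "f k u \<ge> 0 \<or> g u \<ge> 0" if "u \<in> X" for u
    using q(3) that by (force simp: X'_def g_def)
  ultimately obtain l where l: "0 \<le> l" "l \<le> 1" "\<And>u. u \<in> X \<Longrightarrow> l * f k u + (1 - l) * g u \<ge> 0"
    using convex_alternative_pair[of X "f k" g] insert.prems by blast
  define p where "p i = (if i = k then l else (1 - l) * q i)" for i
  have "sum p J = (1 - l) * sum q J" "(\<Sum>i\<in>J. p i * f i u) = (1 - l) * g u" for u
    using \<open>k \<notin> J\<close> by (auto simp: p_def g_def sum_distrib_left mult.assoc intro!: sum.cong)
  then show ?case
    using insert.hyps q l by (intro exI[of _ p]) (auto simp: p_def)
qed

lemma weights_with_singleton_support:
  fixes p :: "'i \<Rightarrow> real"
  assumes "finite G" "\<And>i. i \<in> G \<Longrightarrow> p i \<ge> 0" "sum p G = 1" "card {i\<in>G. p i > 0} < 2"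
  shows "\<exists>i\<in>G. \<forall>h. (\<Sum>j\<in>G. p j * h j) = h i"
proof -
  define S where "S = {i\<in>G. p i > 0}"
  have G_to_S: "(\<Sum>j\<in>G. p j * h j) = (\<Sum>j\<in>S. p j * h j)" for h
    using assms(1,2) by (intro sum.mono_neutral_right) (force simp: S_def)+
  have "S \<noteq> {}"
    using G_to_S[of "\<lambda>_. 1"] assms(3) by auto
  moreover have "finite S"
    using assms(1) by (simp add: S_def)
  ultimately have "card S = 1"
    using assms(4) card_gt_0_iff[of S] by (simp add: S_def[symmetric])
  then obtain i where "S = {i}"
    by (rule card_1_singletonE)
  moreover have "p i = 1"
    using G_to_S[of "\<lambda>_. 1"] assms(3) \<open>S = {i}\<close> by simp
  moreover have "i \<in> G"
    using \<open>S = {i}\<close> by (auto simp: S_def)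
  ultimately show ?thesis
    using G_to_S by (intro bexI[of _ i] allI) simp_all
qed

lemma saddle_point_minimax:
  fixes F :: "'p \<Rightarrow> 'u \<Rightarrow> real"
  assumes "p0 \<in> S" "\<And>u. F p0 u \<ge> M" "\<And>q. q \<in> S \<Longrightarrow> F q u0 \<le> M"
  shows "(INF u. SUP q\<in>S. ereal (F q u)) = ereal M"
    and "(SUP q\<in>S. INF u. ereal (F q u)) = ereal M"
proof -
  have "(INF u. SUP q\<in>S. ereal (F q u)) \<le> (SUP q\<in>S. ereal (F q u0))"
    by (rule INF_lower) simp
  also have "\<dots> \<le> ereal M"
    using assms(3) by (intro SUP_least) simp
  finally show "(INF u. SUP q\<in>S. ereal (F q u)) = ereal M"
    using assms(1,2) by (intro antisym INF_greatest SUP_upper2[of p0]) auto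
  show "(SUP q\<in>S. INF u. ereal (F q u)) = ereal M"
    using assms by (intro antisym SUP_least INF_lower2[of u0] SUP_upper2[of p0] INF_greatest) auto
qed

definition zero_extension :: "nat set \<Rightarrow> (nat \<Rightarrow> real) \<Rightarrow> nat \<Rightarrow> real" where
  "zero_extension G p i = (if i \<in> G then p i else 0)"

lemma pH_zero_extension:
  assumes "G \<subseteq> {1..N}"
  shows "pH N (zero_extension G p) H u = (\<Sum>i\<in>G. p i * H i u)"
proof -
  have "pH N (zero_extension G p) H u = (\<Sum>i\<in>{1..N} \<inter> G. p i * H i u)"
    by (auto simp: pH_def zero_extension_def sum.inter_restrict intro!: sum.cong)
  then show ?thesis
    using assms by (simp add: Int_absorb1)
qed

lemma zero_extension_in_unit_simplex:
  assumes "G \<subseteq> {1..N}" "\<And>i. i \<in> G \<Longrightarrow> p i \<ge> 0" "sum p G = 1"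
  shows "zero_extension G p \<in> unit_simplex N"
proof -
  have "finite G"
    using assms(1) finite_subset by blast
  then have "p i \<le> 1" if "i \<in> G" for i
    using assms(2,3) that member_le_sum[of i G p] by auto
  moreover have "(\<Sum>j\<in>{1..N}. zero_extension G p j) = 1"
    using pH_zero_extension[OF assms(1), of p "\<lambda>_ _. 1"] assms(3) by (simp add: pH_def)
  ultimately show ?thesis
    using assms by (auto simp: unit_simplex_def zero_extension_def)
qed

lemma supp_vec_zero_extension:
  assumes "G \<subseteq> {1..N}"
  shows "supp_vec N (zero_extension G p) = {i\<in>G. p i > 0}"
  using assms by (auto simp: supp_vec_def zero_extension_def)

lemma non_pure_zero_extension:
  fixes f :: "nat \<Rightarrow> 'a \<Rightarrow> real"
  assumes "G \<subseteq> {1..N}" "\<And>i. i \<in> G \<Longrightarrow> p i \<ge> 0" "sum p G = 1"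
    and "\<And>u. (\<Sum>i\<in>G. p i * f i u) \<ge> 0" "\<And>i. i \<in> G \<Longrightarrow> \<exists>u. f i u < 0"
  shows "non_pure N (zero_extension G p)"
proof (rule ccontr)
  assume "\<not> non_pure N (zero_extension G p)"
  then have "card {i\<in>G. p i > 0} < 2"
    using assms(1) by (simp add: non_pure_def supp_vec_zero_extension)
  moreover have "finite G"
    using assms(1) finite_subset by blast
  ultimately obtain i where "i \<in> G" "\<forall>h. (\<Sum>j\<in>G. p j * h j) = h i"
    using weights_with_singleton_support[of G p] assms(2,3) by blast
  then show False
    using assms(4,5) by (metis not_le)
qed

lemma pH_le_if_components_le:
  assumes "q \<in> unit_simplex N" "\<And>j. j \<in> {1..N} \<Longrightarrow> H j u \<le> M"
  shows "pH N q H u \<le> M"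
proof -
  have "pH N q H u \<le> (\<Sum>j\<in>{1..N}. q j * M)"
    using assms unfolding pH_def unit_simplex_def by (intro sum_mono mult_left_mono) auto
  also have "\<dots> = M"
    using assms(1) by (simp add: unit_simplex_def flip: sum_distrib_right)
  finally show ?thesis .
qed

theorem lemma1:
  fixes N :: nat and H :: "nat \<Rightarrow> real^'m \<Rightarrow> real"
    and ustar :: "real^'m" and G :: "nat set"
  assumes conv: "\<And>i. i \<in> {1..N} \<Longrightarrow> convex_on UNIV (H i)"
    and G_sub: "G \<subseteq> {1..N}" and G_card: "card G \<ge> 2"
    and a: "\<And>i. i \<in> G \<Longrightarrow> H i ustar = Max {H j ustar | j. j \<in> {1..N}}"
    and b: "\<And>u. u \<noteq> ustar \<Longrightarrow> \<exists>i\<in>G. H i u > H i ustar"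
    and c: "\<And>i. i \<in> G \<Longrightarrow> \<not> (\<forall>u. H i ustar \<le> H i u)"
  shows "\<exists>pstar \<in> unit_simplex N. non_pure N pstar \<and> supp_vec N pstar \<subseteq> G \<and>
     (INF u. SUP p\<in>unit_simplex N. ereal (pH N p H u)) = ereal (pH N pstar H ustar) \<and>
     ereal (pH N pstar H ustar) = (SUP p\<in>unit_simplex N. INF u. ereal (pH N p H u))"
proof -
  define M where "M = Max {H j ustar | j. j \<in> {1..N}}"
  have H_le_M: "H j ustar \<le> M" if "j \<in> {1..N}" for j
    unfolding M_def using that by (intro Max_ge) auto
  have "finite G" "G \<noteq> {}"
    using G_sub G_card finite_subset by fastforce+
  moreover have "convex_on UNIV (\<lambda>u. H i u - M)" if "i \<in> G" for i
    using conv G_sub that by (auto simp: concave_on_const intro!: convex_on_diff)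
  moreover have "\<exists>i\<in>G. H i u - M \<ge> 0" for u
    using b[of u] a \<open>G \<noteq> {}\<close> by (cases "u = ustar") (force simp: M_def)+
  ultimately obtain p where p_nonneg: "\<And>i. i \<in> G \<Longrightarrow> p i \<ge> 0" and p_sum: "sum p G = 1"
    and p_alt: "\<And>u. (\<Sum>i\<in>G. p i * (H i u - M)) \<ge> 0"
    using convex_alternative[of G UNIV "\<lambda>i u. H i u - M"] by auto
  define pstar where "pstar = zero_extension G p"
  have H_dips: "\<exists>u. H i u - M < 0" if "i \<in> G" for i
    using c[OF that] by (auto simp: not_le a[OF that, folded M_def])
  have non_pure: "non_pure N pstar"
    unfolding pstar_def
    by (rule non_pure_zero_extension[where f = "\<lambda>i u. H i u - M", OF G_sub p_nonneg p_sum p_alt H_dips])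
  have pstar: "pstar \<in> unit_simplex N" "supp_vec N pstar \<subseteq> G"
    using zero_extension_in_unit_simplex[OF G_sub p_nonneg p_sum]
    by (auto simp: pstar_def supp_vec_zero_extension[OF G_sub])
  have pstar_ge: "pH N pstar H u \<ge> M" for u
    using p_alt[of u] p_sum by (simp add: pstar_def pH_zero_extension[OF G_sub]
        right_diff_distrib sum_subtractf flip: sum_distrib_right)
  have ustar_le: "pH N q H ustar \<le> M" if "q \<in> unit_simplex N" for q
    using that H_le_M by (rule pH_le_if_components_le)
  have "pH N pstar H ustar = M"
    using ustar_le[OF pstar(1)] pstar_ge[of ustar] by (rule antisym)
  then show ?thesis
    using saddle_point_minimax[where F = "\<lambda>q. pH N q H", OF pstar(1) pstar_ge ustar_le] non_pure pstar by auto
qed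

end
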